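(* For every integer $n\ge1$, a series $h\in M$ lies in $S'_{-1,n-1}=\mu(S_{-1}\cap S_{n-1})$ if and only if $z^n=H^{(n)}$; equivalently, under the Lax map, its Lax operator $\mathcal L=\phi(z)$ satisfies $\mathcal L^n=(\mathcal L^n)_+$ (the $n$-th Gelfand–Dickey reduction).
   Context: Let $x$ be a space variable; coefficients are functions of $x$. $M$ is the affine space of formal Laurent series $h(z)=z+\sum_{j\ge1}h_jz^{-j}$, $A$ that of $a(z)=z+\sum_{j\ge0}a_jz^{-j}$, $N=M\times A$, $\mu(h,a)=h$. Faà di Bruno iterates: $h^{(0)}=1$, $h^{(j+1)}=\partial_xh^{(j)}+h\,h^{(j)}$ for $j\in\mathbb Z$ (negative ones by backward recursion). For $j\ge0$ the KP current $H^{(j)}$ is the unique series $h^{(j)}+\sum_{l=0}^{j-2}p^j_l[h]h^{(l)}$ ($p^j_l$ differential polynomials in the $h_i$) with $H^{(j)}=z^j+O(z^{-1})$. For $l\ge-1$, $S_l\subset N$ is defined by $z^la=H^{(l+1)}+\sum_{m=0}^{l}a_mH^{(l-m)}$ (empty sum for $l=-1$, so $S_{-1}=\{a=z\}$). The Lax map $\phi$ is the linear map from Laurent series to pseudodifferential operators with $\phi(f h^{(j)})=f\partial_x^j$ for $z$-independent $f$; $\mathcal L=\phi(z)$, and $(\cdot)_+$ denotes the differential part of a pseudodifferential operator. It is known that $\phi(H^{(j)})=(\mathcal L^j)_+$ and $\phi(z^kh^{(j)})=\partial_x^j\mathcal L^k$. *)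

theory Defs
  imports "HOL-Computational_Algebra.Formal_Laurent_Series"
begin

(* Coefficient ring ("functions of x"): a commutative ring of characteristic 0
   with a derivation D standing for d/dx. *)
definition is_derivation :: "('a::comm_ring_1 \<Rightarrow> 'a) \<Rightarrow> bool" where
  "is_derivation D \<longleftrightarrow> (\<forall>a b. D (a + b) = D a + D b) \<and> (\<forall>a b. D (a * b) = D a * b + a * D b)"

(* Laurent series in z with finitely many positive powers of z are modelled as
   'a fls in the variable X = z^-1:  the coefficient of z^m is  f $$ (-m). *)
definition zcoeff :: "'a::zero fls \<Rightarrow> int \<Rightarrow> 'a" where
  "zcoeff f m = fls_nth f (- m)"

definition zpow :: "int \<Rightarrow> 'a::{zero,one} fls" where
  "zpow k = fls_shift k 1"

definition dx :: "('a::comm_ring_1 \<Rightarrow> 'a) \<Rightarrow> 'a fls \<Rightarrow> 'a fls" where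
  "dx D f = Abs_fls (\<lambda>m. D (fls_nth f m))"

definition inM :: "'a::comm_ring_1 fls \<Rightarrow> bool" where
  "inM h \<longleftrightarrow> (\<forall>m::int. m \<ge> 0 \<longrightarrow> zcoeff h m = (if m = 1 then 1 else 0))"

definition inA :: "'a::comm_ring_1 fls \<Rightarrow> bool" where
  "inA a \<longleftrightarrow> (\<forall>m::int. m \<ge> 1 \<longrightarrow> zcoeff a m = (if m = 1 then 1 else 0))"

definition acoef :: "'a::comm_ring_1 fls \<Rightarrow> int \<Rightarrow> 'a" where
  "acoef a j = zcoeff a (- j)"

(* Faa di Bruno iterates h^(j), j in Z: h^(0) = 1, h^(j+1) = dx h^(j) + h h^(j)
   (negative indices determined by backward recursion, i.e. by uniqueness). *)
definition fdb :: "('a::comm_ring_1 \<Rightarrow> 'a) \<Rightarrow> 'a fls \<Rightarrow> int \<Rightarrow> 'a fls" where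
  "fdb D h = (THE F. F 0 = 1 \<and> (\<forall>j. F (j + 1) = dx D (F j) + h * F j))"

definition Hcur :: "('a::comm_ring_1 \<Rightarrow> 'a) \<Rightarrow> 'a fls \<Rightarrow> nat \<Rightarrow> 'a fls" where
  "Hcur D h j = (THE G. (\<exists>c::nat \<Rightarrow> 'a.
        G = fdb D h (int j) + (\<Sum>l<j - 1. fls_const (c l) * fdb D h (int l))) \<and>
      (\<forall>m::int. m \<ge> 0 \<longrightarrow> zcoeff G m = (if m = int j then 1 else 0)))"

definition Sset :: "('a::comm_ring_1 \<Rightarrow> 'a) \<Rightarrow> int \<Rightarrow> ('a fls \<times> 'a fls) set" where
  "Sset D l = {(h, a). inM h \<and> inA a \<and>
     zpow l * a = Hcur D h (nat (l + 1)) + (\<Sum>m\<in>{0..l}. fls_const (acoef a m) * Hcur D h (nat (l - m)))}"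

definition Sprime :: "('a::comm_ring_1 \<Rightarrow> 'a) \<Rightarrow> int \<Rightarrow> int \<Rightarrow> 'a fls set" where
  "Sprime D l1 l2 = fst ` (Sset D l1 \<inter> Sset D l2)"

(* Pseudodifferential operators sum_{k <= N} P_k \<partial>^k, modelled as 'a fls
   with the coefficient of \<partial>^k equal to P $$ (-k). *)
definition pdcoeff :: "'a::zero fls \<Rightarrow> int \<Rightarrow> 'a" where
  "pdcoeff P k = fls_nth P (- k)"

(* generalized binomial coefficient binom(k,i) = k(k-1)...(k-i+1)/i! for integer k
   (the division is exact) *)
definition ibinom :: "int \<Rightarrow> nat \<Rightarrow> int" where
  "ibinom k i = (\<Prod>j<i. k - int j) div fact i"

(* composition: \<partial>^k f = sum_{i>=0} binom(k,i) (D^i f) \<partial>^(k-i) *)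
definition pd_mult :: "('a::comm_ring_1 \<Rightarrow> 'a) \<Rightarrow> 'a fls \<Rightarrow> 'a fls \<Rightarrow> 'a fls" where
  "pd_mult D P Q = Abs_fls (\<lambda>r::int.
     (\<Sum>p \<in> {p :: int \<times> nat. pdcoeff P (fst p) \<noteq> 0 \<and> pdcoeff Q (- r - fst p + int (snd p)) \<noteq> 0}.
        pdcoeff P (fst p) * of_int (ibinom (fst p) (snd p)) *
          (D ^^ snd p) (pdcoeff Q (- r - fst p + int (snd p)))))"

definition pd_pow :: "('a::comm_ring_1 \<Rightarrow> 'a) \<Rightarrow> 'a fls \<Rightarrow> nat \<Rightarrow> 'a fls" where
  "pd_pow D P n = (pd_mult D P ^^ n) 1"

definition pd_plus :: "'a::zero fls \<Rightarrow> 'a fls" where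
  "pd_plus P = Abs_fls (\<lambda>r. if r \<le> 0 then fls_nth P r else 0)"

(* Lax map phi: phi(f) = P  iff  f = sum_j P_j h^(j).  Since h^(j) = z^j + lower
   order terms, only indices j >= m contribute to the coefficient of z^m. *)
definition lax :: "('a::comm_ring_1 \<Rightarrow> 'a) \<Rightarrow> 'a fls \<Rightarrow> 'a fls \<Rightarrow> 'a fls" where
  "lax D h f = (THE P. \<forall>m::int. zcoeff f m =
      (\<Sum>j\<in>{j. m \<le> j \<and> pdcoeff P j \<noteq> 0}. pdcoeff P j * zcoeff (fdb D h j) m))"

definition LaxOp :: "('a::comm_ring_1 \<Rightarrow> 'a) \<Rightarrow> 'a fls \<Rightarrow> 'a fls" where
  "LaxOp D h = lax D h (zpow 1)"

end

theory Submission
  imports Defs "HOL-Library.Groups_Big_Fun"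
begin

(*
  Write \<nabla> = \<partial>_x + h, so that h^(j+1) = \<nabla> h^(j). On Laurent series \<nabla> lowers the order by
  exactly one and is bijective (its equations are triangular); this defines h^(j) for all
  j \<in> \<int>, with h^(j) = z^j + O(z^(j-2)). Hence the inverse Lax map
  \<psi>(\<Sum>_j P_j \<partial>^j) = \<Sum>_j P_j h^(j) is a bijection from pseudodifferential operators to series.
  The Leibniz rule gives \<psi>(\<partial> \<circ> R) = \<nabla> \<psi>(R); iterating forwards and, by injectivity of \<nabla>,
  backwards yields \<psi>(\<partial>^k \<circ> Q) = z^a h^(k) whenever \<psi>(Q) = z^a, and summing over the
  coefficients of P gives \<psi>(P \<circ> Q) = z^a \<psi>(P). So \<psi>(L^n) = z^n. The differential part
  \<partial>^n + \<Sum>_(l<n-1) c_l \<partial>^l of L^n is sent to h^(n) + \<Sum>_(l<n-1) c_l h^(l), which agrees with z^n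
  in every power z^m, m \<ge> 0, and therefore is H^(n). Thus L^n = (L^n)_+ iff z^n = H^(n).
  Finally S_(-1) forces a = z, for which the equation of S_(n-1) reads z^n = H^(n).
*)

unbundle fps_syntax

definition vanishes_below :: "'a::zero fls \<Rightarrow> int \<Rightarrow> bool" where
  "vanishes_below f N \<longleftrightarrow> (\<forall>k<N. f $$ k = 0)"

lemma vanishes_below_subdegree: "vanishes_below f (fls_subdegree f)"
  unfolding vanishes_below_def by simp

lemma vanishes_below_mono: "vanishes_below f N \<Longrightarrow> M \<le> N \<Longrightarrow> vanishes_below f M"
  unfolding vanishes_below_def by simp

lemma fls_times_nth_vanishes_below:
  fixes f g :: "'a::{comm_monoid_add, mult_zero} fls"
  assumes "vanishes_below f a" "vanishes_below g b"
  shows "(f * g) $$ n = (\<Sum>i\<in>{a..n-b}. f $$ i * g $$ (n - i))"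
proof (cases "f = 0 \<or> g = 0")
  case True
  then show ?thesis by auto
next
  case False
  have "a \<le> fls_subdegree f" "b \<le> fls_subdegree g"
    using assms False unfolding vanishes_below_def by (meson fls_subdegree_geI)+
  then have "(\<Sum>i\<in>{fls_subdegree f..n - fls_subdegree g}. f $$ i * g $$ (n - i)) =
      (\<Sum>i\<in>{a..n-b}. f $$ i * g $$ (n - i))"
    by (intro sum.mono_neutral_left) auto
  then show ?thesis by (simp add: fls_times_nth(2))
qed

lemma zpow_nth: "zpow a $$ k = (if k = -a then 1 else 0)"
  unfolding zpow_def by simp

lemma zpow_0 [simp]: "zpow 0 = 1"
  by (simp add: zpow_def)

lemma zpow_times: "zpow a * f = fls_shift a (f :: 'a::comm_semiring_1 fls)"
  by (simp add: zpow_def fls_shifted_times_simps)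

lemma zpow_add: "zpow (a + b) = (zpow a * zpow b :: 'a::comm_semiring_1 fls)"
  by (simp add: zpow_def fls_times_both_shifted_simp)

lemma Sum_any_eq_sum_superset:
  "finite A \<Longrightarrow> (\<And>x. x \<notin> A \<Longrightarrow> g x = 0) \<Longrightarrow> Sum_any g = sum g A"
  by (rule Sum_any.expand_superset) auto

lemma Sum_any_curry:
  fixes g :: "'a \<times> 'b \<Rightarrow> 'c::comm_monoid_add"
  assumes "finite {x. g x \<noteq> 0}"
  shows "Sum_any (\<lambda>a. Sum_any (\<lambda>b. g (a, b))) = Sum_any g"
proof -
  let ?S = "{x. g x \<noteq> 0}"
  have "Sum_any (\<lambda>a. Sum_any (\<lambda>b. g (a, b))) = Sum_any (\<lambda>(a, b). g (a, b))"
    by (rule Sum_any.cartesian_product[of "fst ` ?S \<times> snd ` ?S"])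
      (use assms in \<open>auto intro: rev_image_eqI\<close>)
  then show ?thesis by simp
qed

function triangular_solution ::
    "(int \<Rightarrow> (int \<Rightarrow> 'a) \<Rightarrow> 'a) \<Rightarrow> (int \<Rightarrow> 'a::ab_group_add) \<Rightarrow> int \<Rightarrow> int \<Rightarrow> 'a" where
  "triangular_solution R g N k = (if k < N then 0 else
     g k - R k (\<lambda>i. if N \<le> i \<and> i < k then triangular_solution R g N i else 0))"
  by pat_completeness auto
termination by (relation "measure (\<lambda>(R, g, N, k). nat (k - N))") auto

declare triangular_solution.simps[simp del]

lemma triangular_system_solvable:
  fixes R :: "int \<Rightarrow> (int \<Rightarrow> 'a::ab_group_add) \<Rightarrow> 'a"
  assumes local: "\<And>k f f'. (\<forall>i<k. f i = f' i) \<Longrightarrow> R k f = R k f'"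
    and zero: "\<And>k f. (\<forall>i<k. f i = 0) \<Longrightarrow> R k f = 0"
    and g: "\<forall>k<N. g k = 0"
  shows "\<exists>f. (\<forall>k<N. f k = 0) \<and> (\<forall>k. f k + R k f = g k)"
proof (intro exI conjI allI impI)
  let ?f = "triangular_solution R g N"
  show "?f k = 0" if "k < N" for k
    using that by (simp add: triangular_solution.simps)
  show "?f k + R k ?f = g k" for k
  proof (cases "k < N")
    case True
    have "R k ?f = 0"
      by (rule zero) (use True in \<open>auto simp: triangular_solution.simps\<close>)
    then show ?thesis using True g by (simp add: triangular_solution.simps)
  next
    case False
    have "R k (\<lambda>i. if N \<le> i \<and> i < k then ?f i else 0) = R k ?f"
      by (rule local) (auto simp: triangular_solution.simps)
    then show ?thesis using False by (subst (1) triangular_solution.simps) simp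
  qed
qed

locale derivation =
  fixes D :: "'a::comm_ring_1 \<Rightarrow> 'a"
  assumes is_derivation: "is_derivation D"
begin

lemma D_add: "D (a + b) = D a + D b"
  using is_derivation unfolding is_derivation_def by auto

lemma D_mult: "D (a * b) = D a * b + a * D b"
  using is_derivation unfolding is_derivation_def by auto

lemma D_0 [simp]: "D 0 = 0"
  using D_add[of 0 0] by simp

lemma D_1 [simp]: "D 1 = 0"
  using D_mult[of 1 1] by simp

lemma D_diff: "D (a - b) = D a - D b"
  using D_add[of "a - b" b] by simp

lemma D_sum: "D (sum f S) = (\<Sum>x\<in>S. D (f x))"
  by (induction S rule: infinite_finite_induct) (auto simp: D_add)

lemma D_of_int [simp]: "D (of_int c) = 0"
  by (induction c rule: int_induct[where k = 0]) (simp_all add: D_add D_diff)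

lemma D_of_int_mult: "D (of_int c * a) = of_int c * D a"
  by (simp add: D_mult)

lemma D_funpow_0 [simp]: "(D ^^ i) 0 = 0"
  by (induction i) auto

lemma dx_nth [simp]: "dx D f $$ k = D (f $$ k)"
  unfolding dx_def by (rule nth_Abs_fls_lower_bound[of "fls_subdegree f"]) auto

lemma dx_0 [simp]: "dx D 0 = 0"
  by (rule fls_eqI) simp

lemma dx_diff: "dx D (f - g) = dx D f - dx D g"
  by (rule fls_eqI) (simp add: D_diff)

lemma dx_zpow_times: "dx D (zpow a * f) = zpow a * dx D f"
  by (rule fls_eqI) (simp add: zpow_times)

end

section \<open>Pseudodifferential operators\<close>

lemma ibinom_0 [simp]: "ibinom k 0 = 1"
  by (simp add: ibinom_def)

lemma ibinom_Suc_Suc: "ibinom (k + 1) (Suc i) = ibinom k i + ibinom k (Suc i)"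
  using gbinomial_int_Suc_Suc[of k i] by (simp only: ibinom_def gbinomial_prod_rev atLeast0LessThan)

lemma ibinom_0_left: "ibinom 0 i = (if i = 0 then 1 else 0)"
  using gbinomial_0_left[of i, where 'a = int] by (simp only: ibinom_def gbinomial_prod_rev atLeast0LessThan)

(* Read as a pseudodifferential operator, zpow k is \<partial>^k. *)
lemma pd_plus_eq_sum_zpow:
  fixes M :: "'a::comm_ring_1 fls"
  assumes "n \<ge> 1" "vanishes_below M (- int n)" "M $$ (- int n) = 1" "M $$ (1 - int n) = 0"
  shows "pd_plus M = zpow (int n) + (\<Sum>l<n - 1. fls_const (M $$ (- int l)) * zpow (int l))"
proof (rule fls_eqI)
  fix r
  have plus_nth: "pd_plus M $$ r = (if r \<le> 0 then M $$ r else 0)"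
    unfolding pd_plus_def by (rule nth_Abs_fls_lower_bound[of "fls_subdegree M"]) auto
  have "(fls_const (M $$ (- int l)) * zpow (int l)) $$ r =
      (if l = nat (- r) then if r \<le> 0 then M $$ r else 0 else 0)" for l
    by (auto simp: zpow_nth)
  then have sum_nth: "(\<Sum>l<n - 1. fls_const (M $$ (- int l)) * zpow (int l)) $$ r =
      (if nat (- r) < n - 1 \<and> r \<le> 0 then M $$ r else 0)"
    by (simp add: fls_nth_sum sum.delta)
  consider "r > 0" | "r < - int n" | "r = - int n" | "r = 1 - int n" | "1 - int n < r \<and> r \<le> 0"
    by linarith
  then have "(if r \<le> 0 then M $$ r else 0) =
      (if r = - int n then 1 else 0) + (if nat (- r) < n - 1 \<and> r \<le> 0 then M $$ r else 0)"
  proof cases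
    case 2
    then show ?thesis using assms(2) by (simp add: vanishes_below_def)
  next
    case 5
    then have "nat (- r) < n - 1" by linarith
    then show ?thesis using 5 by simp
  qed (use assms in auto)
  then show "pd_plus M $$ r = (zpow (int n) + (\<Sum>l<n - 1. fls_const (M $$ (- int l)) * zpow (int l))) $$ r"
    by (simp only: fls_plus_nth plus_nth sum_nth zpow_nth)
qed

context derivation
begin

definition pd_mult_term :: "'a fls \<Rightarrow> 'a fls \<Rightarrow> int \<Rightarrow> int \<times> nat \<Rightarrow> 'a" where
  "pd_mult_term P Q r = (\<lambda>(k, i). P $$ (- k) * of_int (ibinom k i) * (D ^^ i) (Q $$ (r + k - int i)))"

definition pd_mult_indices :: "'a fls \<Rightarrow> 'a fls \<Rightarrow> int \<Rightarrow> (int \<times> nat) set" where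
  "pd_mult_indices P Q r = {(k, i). P $$ (- k) \<noteq> 0 \<and> Q $$ (r + k - int i) \<noteq> 0}"

lemma pd_mult_indices_subset:
  "pd_mult_indices P Q r \<subseteq>
     {fls_subdegree Q - r..- fls_subdegree P} \<times> {0..nat (r - fls_subdegree P - fls_subdegree Q)}"
  unfolding pd_mult_indices_def by (auto dest!: fls_subdegree_leI)

lemma finite_pd_mult_indices: "finite (pd_mult_indices P Q r)"
  using pd_mult_indices_subset by (rule finite_subset) simp

lemma pd_mult_term_support: "{x. pd_mult_term P Q r x \<noteq> 0} \<subseteq> pd_mult_indices P Q r"
  by (auto simp: pd_mult_term_def pd_mult_indices_def)

lemma finite_pd_mult_term_support: "finite {x. pd_mult_term P Q r x \<noteq> 0}"
  using pd_mult_term_support finite_pd_mult_indices by (rule finite_subset)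

lemma pd_mult_eq_Abs_fls: "pd_mult D P Q = Abs_fls (\<lambda>r. Sum_any (pd_mult_term P Q r))"
  unfolding pd_mult_def
proof (intro arg_cong[where f = Abs_fls] ext)
  fix r
  let ?S = "{p. pdcoeff P (fst p) \<noteq> 0 \<and> pdcoeff Q (- r - fst p + int (snd p)) \<noteq> 0}"
  have "?S = pd_mult_indices P Q r"
    by (auto simp: pd_mult_indices_def pdcoeff_def algebra_simps)
  then have "finite ?S"
    using finite_pd_mult_indices by simp
  then have "Sum_any (pd_mult_term P Q r) = sum (pd_mult_term P Q r) ?S"
    by (rule Sum_any_eq_sum_superset) (auto simp: pd_mult_term_def pdcoeff_def algebra_simps)
  then show "(\<Sum>p\<in>?S. pdcoeff P (fst p) * of_int (ibinom (fst p) (snd p)) *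
      (D ^^ snd p) (pdcoeff Q (- r - fst p + int (snd p)))) = Sum_any (pd_mult_term P Q r)"
    by (simp add: pd_mult_term_def pdcoeff_def split_def algebra_simps)
qed

lemma pd_mult_nth: "pd_mult D P Q $$ r = Sum_any (pd_mult_term P Q r)"
  unfolding pd_mult_eq_Abs_fls
proof (rule nth_Abs_fls_lower_bound[of "fls_subdegree P + fls_subdegree Q"], intro allI impI)
  fix r
  assume "r < fls_subdegree P + fls_subdegree Q"
  then have "pd_mult_term P Q r = (\<lambda>_. 0)"
    using pd_mult_term_support[of P Q r] pd_mult_indices_subset[of P Q r] by fastforce
  then show "Sum_any (pd_mult_term P Q r) = 0"
    by simp
qed

lemma pd_mult_zpow_nth:
  "pd_mult D (zpow k) Q $$ r = Sum_any (\<lambda>i. of_int (ibinom k i) * (D ^^ i) (Q $$ (r + k - int i)))"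
proof -
  have "pd_mult D (zpow k) Q $$ r =
      Sum_any (\<lambda>k'. Sum_any (\<lambda>i. pd_mult_term (zpow k) Q r (k', i)))"
    unfolding pd_mult_nth by (rule Sum_any_curry[OF finite_pd_mult_term_support, symmetric])
  also have "\<dots> = Sum_any (\<lambda>k'. if k' = k
      then Sum_any (\<lambda>i. of_int (ibinom k i) * (D ^^ i) (Q $$ (r + k - int i))) else 0)"
    by (rule Sum_any.cong) (simp add: pd_mult_term_def zpow_nth)
  finally show ?thesis by simp
qed

lemma pd_mult_zpow_nth_eq_sum:
  assumes "r + k - fls_subdegree Q \<le> int M"
  shows "pd_mult D (zpow k) Q $$ r = (\<Sum>i\<le>M. of_int (ibinom k i) * (D ^^ i) (Q $$ (r + k - int i)))"
  unfolding pd_mult_zpow_nth by (rule Sum_any_eq_sum_superset) (use assms in auto)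

lemma finite_pd_mult_zpow_support:
  "finite {i. of_int (ibinom k i) * (D ^^ i) (Q $$ (r + k - int i)) \<noteq> 0}"
proof (rule finite_subset)
  show "{i. of_int (ibinom k i) * (D ^^ i) (Q $$ (r + k - int i)) \<noteq> 0} \<subseteq> {..nat (r + k - fls_subdegree Q)}"
  proof
    fix i
    assume "i \<in> {i. of_int (ibinom k i) * (D ^^ i) (Q $$ (r + k - int i)) \<noteq> 0}"
    then have "Q $$ (r + k - int i) \<noteq> 0" by auto
    then have "fls_subdegree Q \<le> r + k - int i" by (rule fls_subdegree_leI)
    then show "i \<in> {..nat (r + k - fls_subdegree Q)}" by simp
  qed
qed simp

lemma pd_mult_one [simp]: "pd_mult D 1 Q = Q"
proof (rule fls_eqI)
  fix r
  have "pd_mult D 1 Q $$ r = Sum_any (\<lambda>i. of_int (ibinom 0 i) * (D ^^ i) (Q $$ (r - int i)))"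
    using pd_mult_zpow_nth[of 0 Q r] by simp
  also have "\<dots> = Sum_any (\<lambda>i::nat. if i = 0 then Q $$ r else 0)"
    by (rule arg_cong[where f = Sum_any]) (auto simp: ibinom_0_left)
  finally show "pd_mult D 1 Q $$ r = Q $$ r"
    by simp
qed

(* \<partial>^(k+1) \<circ> Q = \<partial> \<circ> (\<partial>^k \<circ> Q), and left composition with \<partial> is
   R \<mapsto> dx D R + zpow 1 * R. *)
lemma pd_mult_zpow_succ:
  "pd_mult D (zpow (k + 1)) Q = dx D (pd_mult D (zpow k) Q) + zpow 1 * pd_mult D (zpow k) Q"
proof (rule fls_eqI)
  fix r
  define M where "M = nat (r + k + 1 - fls_subdegree Q)"
  define c where "c i = (D ^^ i) (Q $$ (r + (k + 1) - int i))" for i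
  have c_Suc: "c (Suc i) = D ((D ^^ i) (Q $$ (r + k - int i)))" for i
    unfolding c_def by (simp add: algebra_simps)
  have shift: "(\<Sum>i\<le>Suc M. of_int (ibinom k' i) * c i) =
      c 0 + (\<Sum>i\<le>M. of_int (ibinom k' (Suc i)) * c (Suc i))" for k'
    by (simp only: sum.atMost_Suc_shift) simp
  have "pd_mult D (zpow (k + 1)) Q $$ r = (\<Sum>i\<le>Suc M. of_int (ibinom (k + 1) i) * c i)"
    unfolding c_def by (rule pd_mult_zpow_nth_eq_sum) (simp add: M_def)
  also have "\<dots> = (\<Sum>i\<le>M. of_int (ibinom k i) * c (Suc i)) +
      (c 0 + (\<Sum>i\<le>M. of_int (ibinom k (Suc i)) * c (Suc i)))"
    unfolding shift by (simp add: ibinom_Suc_Suc distrib_right sum.distrib)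
  also have "\<dots> = (\<Sum>i\<le>M. of_int (ibinom k i) * c (Suc i)) + (\<Sum>i\<le>Suc M. of_int (ibinom k i) * c i)"
    unfolding shift ..
  also have "(\<Sum>i\<le>M. of_int (ibinom k i) * c (Suc i)) = dx D (pd_mult D (zpow k) Q) $$ r"
    using pd_mult_zpow_nth_eq_sum[of r k Q M] by (simp add: M_def c_Suc D_sum D_of_int_mult)
  also have "(\<Sum>i\<le>Suc M. of_int (ibinom k i) * c i) = (zpow 1 * pd_mult D (zpow k) Q) $$ r"
    using pd_mult_zpow_nth_eq_sum[of "r + 1" k Q "Suc M"] by (simp add: zpow_times M_def c_def ac_simps)
  finally show "pd_mult D (zpow (k + 1)) Q $$ r =
      (dx D (pd_mult D (zpow k) Q) + zpow 1 * pd_mult D (zpow k) Q) $$ r"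
    by simp
qed

end

locale kp_point = derivation D for D :: "'a::comm_ring_1 \<Rightarrow> 'a" +
  fixes h :: "'a fls"
  assumes inM: "inM h"
begin

lemma h_nth: "k \<le> 0 \<Longrightarrow> h $$ k = (if k = -1 then 1 else 0)"
  using inM unfolding inM_def zcoeff_def by (metis minus_minus neg_0_le_iff_le)

lemma vanishes_below_h: "vanishes_below h (-1)"
  unfolding vanishes_below_def using h_nth by auto

section \<open>Faa di Bruno iterates\<close>

definition nabla :: "'a fls \<Rightarrow> 'a fls" where
  "nabla f = dx D f + h * f"

lemma h_times_nth:
  assumes "vanishes_below f N"
  shows "(h * f) $$ k = f $$ (k + 1) + (\<Sum>t\<in>{1..k-N}. h $$ t * f $$ (k - t))"
proof -
  have sum: "(h * f) $$ k = (\<Sum>t\<in>{-1..k-N}. h $$ t * f $$ (k - t))"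
    using fls_times_nth_vanishes_below[OF vanishes_below_h assms] by simp
  consider "k < N - 1" | "k = N - 1" | "k \<ge> N" by linarith
  then show ?thesis
  proof cases
    case 1
    then show ?thesis using assms sum unfolding vanishes_below_def by simp
  next
    case 2
    then show ?thesis using sum h_nth[of "-1"] by simp
  next
    case 3
    then have "{-1..k-N} = {-1, 0} \<union> {1..k-N}" by auto
    then show ?thesis using sum h_nth[of "-1"] h_nth[of 0] by (simp add: sum.union_disjoint)
  qed
qed

lemma nabla_nth:
  assumes "vanishes_below f N"
  shows "nabla f $$ k = D (f $$ k) + f $$ (k + 1) + (\<Sum>t\<in>{1..k-N}. h $$ t * f $$ (k - t))"
  unfolding nabla_def using h_times_nth[OF assms] by simp

lemma nabla_diff: "nabla (f - g) = nabla f - nabla g"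
  unfolding nabla_def dx_diff by (simp add: algebra_simps)

lemma nabla_zpow_times: "nabla (zpow a * f) = zpow a * nabla f"
  unfolding nabla_def dx_zpow_times by (simp add: algebra_simps)

lemma
  assumes "vanishes_below f N"
  shows vanishes_below_nabla: "vanishes_below (nabla f) (N - 1)"
    and nabla_nth_bound: "nabla f $$ (N - 1) = f $$ N"
  using assms nabla_nth[OF assms] unfolding vanishes_below_def by simp_all

lemma nabla_eq_0_iff [simp]: "nabla f = 0 \<longleftrightarrow> f = 0"
proof
  assume "nabla f = 0"
  then have "f $$ fls_subdegree f = 0"
    using nabla_nth_bound[OF vanishes_below_subdegree[of f]] by simp
  then show "f = 0" by (metis nth_fls_subdegree_nonzero)
qed (simp add: nabla_def)

lemma nabla_inj: "nabla f = nabla g \<Longrightarrow> f = g"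
  using nabla_eq_0_iff[of "f - g"] by (simp add: nabla_diff)

lemma vanishes_below_nablaD:
  assumes "vanishes_below (nabla f) N"
  shows "vanishes_below f (N + 1)"
proof (cases "f = 0")
  case False
  have "nabla f $$ (fls_subdegree f - 1) \<noteq> 0"
    using nabla_nth_bound[OF vanishes_below_subdegree[of f]] False by simp
  then have "N + 1 \<le> fls_subdegree f"
    using assms unfolding vanishes_below_def by force
  then show ?thesis unfolding vanishes_below_def by simp
qed (simp add: vanishes_below_def)

lemma surj_nabla: "surj nabla"
  unfolding surj_def
proof
  fix g :: "'a fls"
  define N where "N = fls_subdegree g"
  define R where
    "R = (\<lambda>k (e :: int \<Rightarrow> 'a). D (e (k - 1)) + (\<Sum>t\<in>{1..k-1-N}. h $$ t * e (k - 1 - t)))"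
  have "\<exists>e. (\<forall>k<N. e k = 0) \<and> (\<forall>k. e k + R k e = g $$ k)"
  proof (rule triangular_system_solvable)
    show "R k e = R k e'" if "\<forall>i<k. e i = e' i" for k e e'
      unfolding R_def using that by (auto intro!: sum.cong)
    show "R k e = 0" if "\<forall>i<k. e i = 0" for k e
      unfolding R_def using that by (auto intro!: sum.neutral)
  qed (simp add: N_def)
  then obtain e where e0: "\<forall>k<N. e k = 0" and e: "\<forall>k. e k + R k e = g $$ k" by blast
  define f where "f = Abs_fls (\<lambda>k. e (k - 1))"
  have f_nth: "f $$ k = e (k - 1)" for k
    unfolding f_def by (rule nth_Abs_fls_lower_bound[of "N + 1"]) (use e0 in auto)
  have "vanishes_below f (N + 1)"
    unfolding vanishes_below_def f_nth using e0 by auto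
  from nabla_nth[OF this] have "nabla f $$ k = e k + R k e" for k
    by (simp add: f_nth R_def algebra_simps)
  then have "g = nabla f" using e by (intro fls_eqI) simp
  then show "\<exists>f. g = nabla f" ..
qed

definition nabla_iterates :: "int \<Rightarrow> 'a fls" where
  "nabla_iterates j = (if 0 \<le> j then (nabla ^^ nat j) 1 else (inv nabla ^^ nat (- j)) 1)"

lemma nabla_iterates_succ: "nabla_iterates (j + 1) = nabla (nabla_iterates j)"
proof -
  have nabla_inv: "nabla (inv nabla g) = g" for g
    by (rule surj_f_inv_f[OF surj_nabla])
  consider "0 \<le> j" | "j = -1" | "j < -1" by linarith
  then show ?thesis
  proof cases
    case 1
    then have "nat (j + 1) = Suc (nat j)" by simp
    then show ?thesis using 1 by (simp add: nabla_iterates_def)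
  next
    case 2
    then show ?thesis by (simp add: nabla_iterates_def nabla_inv)
  next
    case 3
    then have "nat (- j) = Suc (nat (- (j + 1)))" by simp
    then show ?thesis using 3 by (simp add: nabla_iterates_def nabla_inv)
  qed
qed

lemma fdb_eq_nabla_iterates: "fdb D h = nabla_iterates"
  unfolding fdb_def
proof (rule the_equality)
  show "nabla_iterates 0 = 1 \<and> (\<forall>j. nabla_iterates (j + 1) = dx D (nabla_iterates j) + h * nabla_iterates j)"
    using nabla_iterates_succ by (simp add: nabla_iterates_def nabla_def)
next
  fix F :: "int \<Rightarrow> 'a fls"
  assume F: "F 0 = 1 \<and> (\<forall>j. F (j + 1) = dx D (F j) + h * F j)"
  then have F_succ: "F (j + 1) = nabla (F j)" for j by (simp add: nabla_def)
  show "F = nabla_iterates"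
  proof
    fix j
    show "F j = nabla_iterates j"
    proof (induction j rule: int_induct[where k = 0])
      case base
      then show ?case using F by (simp add: nabla_iterates_def)
    next
      case (step1 i)
      then show ?case using F_succ nabla_iterates_succ by simp
    next
      case (step2 i)
      then have "nabla (F (i - 1)) = nabla (nabla_iterates (i - 1))"
        using F_succ[of "i - 1"] nabla_iterates_succ[of "i - 1"] by simp
      then show ?case by (rule nabla_inj)
    qed
  qed
qed

abbreviation h_fdb :: "int \<Rightarrow> 'a fls" where
  "h_fdb \<equiv> fdb D h"

lemma fdb_0 [simp]: "h_fdb 0 = 1"
  by (simp add: fdb_eq_nabla_iterates nabla_iterates_def)

lemma fdb_succ: "h_fdb (j + 1) = nabla (h_fdb j)"
  by (simp add: fdb_eq_nabla_iterates nabla_iterates_succ)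

lemma fdb_leading_terms:
  "vanishes_below (h_fdb j) (- j) \<and> h_fdb j $$ (- j) = 1 \<and> h_fdb j $$ (1 - j) = 0"
proof (induction j rule: int_induct[where k = 0])
  case base
  then show ?case by (simp add: vanishes_below_def)
next
  case (step1 i)
  then have below: "vanishes_below (h_fdb i) (- i)" and "h_fdb i $$ (- i) = 1" "h_fdb i $$ (1 - i) = 0"
    by auto
  moreover have "- (i + 1) = - i - 1" "1 - (i + 1) = - i" by simp_all
  ultimately show ?case
    using nabla_nth[OF below, of "- i"] vanishes_below_nabla[OF below] nabla_nth_bound[OF below]
    by (simp add: fdb_succ)
next
  case (step2 i)
  have succ: "nabla (h_fdb (i - 1)) = h_fdb i"
    using fdb_succ[of "i - 1"] by simp
  then have below: "vanishes_below (h_fdb (i - 1)) (1 - i)"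
    using vanishes_below_nablaD[of "h_fdb (i - 1)" "- i"] step2 by simp
  then have "h_fdb (i - 1) $$ (1 - i) = 1"
    using nabla_nth_bound[OF below] step2 succ by simp
  moreover have "nabla (h_fdb (i - 1)) $$ (1 - i) = h_fdb (i - 1) $$ (2 - i)"
    using nabla_nth[OF below, of "1 - i"] calculation by simp
  ultimately show ?case using below step2 succ by (simp add: algebra_simps)
qed

lemma fdb_nth_below: "K < - j \<Longrightarrow> h_fdb j $$ K = 0"
  using fdb_leading_terms unfolding vanishes_below_def by blast

lemma fdb_nth_leading [simp]: "h_fdb j $$ (- j) = 1"
  using fdb_leading_terms by blast

lemma fdb_uminus_nth_leading [simp]: "h_fdb (- K) $$ K = 1"
  using fdb_nth_leading[of "- K"] by simp

lemma fdb_nth_subleading: "h_fdb j $$ (1 - j) = 0"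
  using fdb_leading_terms by blast

section \<open>The inverse Lax map\<close>

definition lax_inv :: "'a fls \<Rightarrow> 'a fls" where
  "lax_inv P = Abs_fls (\<lambda>K. Sum_any (\<lambda>j. P $$ (- j) * h_fdb j $$ K))"

lemma lax_inv_nth: "lax_inv P $$ K = Sum_any (\<lambda>j. P $$ (- j) * h_fdb j $$ K)"
  unfolding lax_inv_def
proof (rule nth_Abs_fls_lower_bound[of "fls_subdegree P"], intro allI impI)
  fix k
  assume "k < fls_subdegree P"
  then have "P $$ (- j) * h_fdb j $$ k = 0" for j
    by (cases "k < - j") (simp_all add: fdb_nth_below)
  then show "Sum_any (\<lambda>j. P $$ (- j) * h_fdb j $$ k) = 0" by simp
qed

lemma lax_inv_nth_eq_sum:
  assumes "\<forall>j>J. P $$ (- j) = 0"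
  shows "lax_inv P $$ K = (\<Sum>j\<in>{-K..J}. P $$ (- j) * h_fdb j $$ K)"
  unfolding lax_inv_nth
  by (rule Sum_any_eq_sum_superset) (use assms in \<open>auto simp: fdb_nth_below\<close>)

lemma lax_inv_vanishes_below: "vanishes_below (lax_inv P) (fls_subdegree P)"
  unfolding vanishes_below_def
proof (intro allI impI)
  fix k
  assume "k < fls_subdegree P"
  then show "lax_inv P $$ k = 0"
    using lax_inv_nth_eq_sum[of "- fls_subdegree P" P k] by simp
qed

lemma lax_inv_nth_subdegree: "lax_inv P $$ fls_subdegree P = P $$ fls_subdegree P"
  using lax_inv_nth_eq_sum[of "- fls_subdegree P" P "fls_subdegree P"] by simp

lemma lax_inv_add: "lax_inv (P + Q) = lax_inv P + lax_inv Q"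
proof (rule fls_eqI)
  fix K
  define J where "J = max (- fls_subdegree P) (- fls_subdegree Q)"
  have J: "\<forall>j>J. P $$ (- j) = 0" "\<forall>j>J. Q $$ (- j) = 0" "\<forall>j>J. (P + Q) $$ (- j) = 0"
    unfolding J_def by auto
  show "lax_inv (P + Q) $$ K = (lax_inv P + lax_inv Q) $$ K"
    unfolding fls_plus_nth lax_inv_nth_eq_sum[OF J(1)] lax_inv_nth_eq_sum[OF J(2)]
      lax_inv_nth_eq_sum[OF J(3)]
    by (simp add: sum.distrib algebra_simps)
qed

lemma lax_inv_diff: "lax_inv (P - Q) = lax_inv P - lax_inv Q"
  using lax_inv_add[of "P - Q" Q] by (simp add: eq_diff_eq)

lemma lax_inv_0 [simp]: "lax_inv 0 = 0"
  by (rule fls_eqI) (simp add: lax_inv_nth)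

lemma lax_inv_const_zpow: "lax_inv (fls_const c * zpow j) = fls_const c * h_fdb j"
proof (rule fls_eqI)
  fix K
  have "lax_inv (fls_const c * zpow j) $$ K = Sum_any (\<lambda>j'. if j' = j then c * h_fdb j $$ K else 0)"
    unfolding lax_inv_nth by (rule arg_cong[where f = Sum_any]) (auto simp: zpow_nth)
  then show "lax_inv (fls_const c * zpow j) $$ K = (fls_const c * h_fdb j) $$ K"
    by simp
qed

lemma lax_inv_1 [simp]: "lax_inv 1 = 1"
  using lax_inv_const_zpow[of 1 0] by simp

lemma lax_inv_sum: "lax_inv (sum f A) = (\<Sum>a\<in>A. lax_inv (f a))"
  by (induction A rule: infinite_finite_induct) (simp_all add: lax_inv_add)

lemma lax_inv_eq_0_iff [simp]: "lax_inv P = 0 \<longleftrightarrow> P = 0"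
proof
  assume "lax_inv P = 0"
  then have "P $$ fls_subdegree P = 0"
    using lax_inv_nth_subdegree[of P] by simp
  then show "P = 0" by (metis nth_fls_subdegree_nonzero)
qed simp

lemma lax_inv_inj: "lax_inv P = lax_inv Q \<Longrightarrow> P = Q"
  using lax_inv_eq_0_iff[of "P - Q"] by (simp add: lax_inv_diff)

lemma surj_lax_inv: "surj lax_inv"
  unfolding surj_def
proof
  fix f :: "'a fls"
  define N where "N = fls_subdegree f"
  define R where "R = (\<lambda>K (p :: int \<Rightarrow> 'a). \<Sum>i\<in>{N..K-1}. p i * h_fdb (- i) $$ K)"
  have "\<exists>p. (\<forall>k<N. p k = 0) \<and> (\<forall>k. p k + R k p = f $$ k)"
  proof (rule triangular_system_solvable)
    show "R k p = R k p'" if "\<forall>i<k. p i = p' i" for k p p'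
      unfolding R_def using that by (auto intro!: sum.cong)
    show "R k p = 0" if "\<forall>i<k. p i = 0" for k p
      unfolding R_def using that by (auto intro!: sum.neutral)
  qed (simp add: N_def)
  then obtain p where p0: "\<forall>k<N. p k = 0" and p: "\<forall>k. p k + R k p = f $$ k" by blast
  define P where "P = Abs_fls p"
  have P_nth: "P $$ k = p k" for k
    unfolding P_def by (rule nth_Abs_fls_lower_bound[of N]) (use p0 in auto)
  have "lax_inv P $$ K = f $$ K" for K
  proof -
    have "lax_inv P $$ K = (\<Sum>j\<in>{-K..-N}. p (- j) * h_fdb j $$ K)"
      using lax_inv_nth_eq_sum[of "- N" P] p0 P_nth by simp
    also have "\<dots> = (\<Sum>i\<in>{N..K}. p i * h_fdb (- i) $$ K)"
      by (rule sum.reindex_bij_witness[of _ uminus uminus]) auto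
    also have "\<dots> = f $$ K"
    proof (cases "N \<le> K")
      case True
      then have "{N..K} = insert K {N..K-1}" by auto
      then show ?thesis using p by (simp add: R_def)
    qed (simp add: N_def)
    finally show ?thesis .
  qed
  then have "f = lax_inv P" by (intro fls_eqI) simp
  then show "\<exists>P. f = lax_inv P" ..
qed

lemma lax_coeff_sum_eq_lax_inv_nth:
  "(\<Sum>j\<in>{j. m \<le> j \<and> pdcoeff P j \<noteq> 0}. pdcoeff P j * zcoeff (h_fdb j) m) = lax_inv P $$ (- m)"
proof -
  have "finite {j. m \<le> j \<and> pdcoeff P j \<noteq> 0}"
    by (rule finite_subset[of _ "{m..- fls_subdegree P}"])
      (auto simp: pdcoeff_def dest!: fls_subdegree_leI)
  then show ?thesis
    unfolding lax_inv_nth pdcoeff_def zcoeff_def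
    by (intro Sum_any_eq_sum_superset[symmetric]) (auto simp: pdcoeff_def fdb_nth_below)
qed

lemma lax_eq_iff_lax_inv: "lax D h f = P \<longleftrightarrow> lax_inv P = f"
proof -
  have lax_cond: "(\<forall>m. zcoeff f m =
        (\<Sum>j\<in>{j. m \<le> j \<and> pdcoeff P j \<noteq> 0}. pdcoeff P j * zcoeff (h_fdb j) m))
      \<longleftrightarrow> lax_inv P = f" for P
    unfolding lax_coeff_sum_eq_lax_inv_nth unfolding zcoeff_def
  proof
    assume "\<forall>m. f $$ (- m) = lax_inv P $$ (- m)"
    then show "lax_inv P = f" by (intro fls_eqI) (metis minus_minus)
  qed simp
  obtain P0 where "f = lax_inv P0"
    using surj_lax_inv by blast
  then have unique: "\<exists>!P. lax_inv P = f"
    using lax_inv_inj by blast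
  show ?thesis
    unfolding lax_def lax_cond using the1_equality[OF unique] theI'[OF unique] by blast
qed

lemma lax_inv_LaxOp: "lax_inv (LaxOp D h) = zpow 1"
  unfolding LaxOp_def using lax_eq_iff_lax_inv by blast

lemma lax_inv_eq_zpowD:
  assumes "lax_inv P = zpow a"
  shows "vanishes_below P (- a)" "P $$ (- a) = 1" "P $$ (1 - a) = 0"
proof -
  have "P \<noteq> 0"
  proof
    assume "P = 0"
    then have "zpow a $$ (- a) = (0 :: 'a fls) $$ (- a)"
      using assms by simp
    then show False by (simp add: zpow_nth)
  qed
  then have "lax_inv P $$ fls_subdegree P \<noteq> 0"
    by (simp add: lax_inv_nth_subdegree)
  then have subdegree: "fls_subdegree P = - a"
    using assms by (simp add: zpow_nth split: if_splits)
  then show "vanishes_below P (- a)"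
    using vanishes_below_subdegree by metis
  show "P $$ (- a) = 1"
    using assms lax_inv_nth_subdegree[of P] by (simp add: subdegree zpow_nth)
  have "{a - 1..a} = {a - 1, a}" by auto
  then have "lax_inv P $$ (1 - a) = P $$ (1 - a)"
    using lax_inv_nth_eq_sum[of a P "1 - a"] subdegree fdb_nth_subleading[of a]
    by (simp add: fdb_nth_leading[of "a - 1", simplified])
  then show "P $$ (1 - a) = 0"
    using assms by (simp add: zpow_nth)
qed

lemma lax_inv_zpow_one_times_nth:
  "lax_inv (zpow 1 * R) $$ K = Sum_any (\<lambda>j. R $$ (- j) * h_fdb (j + 1) $$ K)"
proof -
  have "lax_inv (zpow 1 * R) $$ K = Sum_any (\<lambda>j. R $$ (- j + 1) * h_fdb j $$ K)"
    by (simp add: lax_inv_nth zpow_times)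
  also have "\<dots> = Sum_any (\<lambda>j. R $$ (- j) * h_fdb (j + 1) $$ K)"
    by (rule Sum_any.reindex_cong[of "\<lambda>j. j + 1"]) (auto simp: bij_plus_right fun_eq_iff)
  finally show ?thesis .
qed

lemma nabla_lax_inv: "nabla (lax_inv R) = lax_inv (dx D R + zpow 1 * R)"
proof (rule fls_eqI)
  fix K
  define s where "s = fls_subdegree R"
  define B where "B = {-K-1..-s}"
  have "finite B" by (simp add: B_def)
  have outside_B: "R $$ (- j) = 0 \<or> j < - K - 1" if "j \<notin> B" for j
    using that by (auto simp: B_def s_def)
  have lax_inv_term_outside_B: "R $$ (- j) * h_fdb j $$ K' = 0" if "j \<notin> B" "K' \<le> K + 1" for j K'
    using outside_B[OF that(1)] that(2) by (auto simp: fdb_nth_below)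
  have term_outside_B:
    "D (R $$ (- j)) * h_fdb j $$ K = 0" "R $$ (- j) * h_fdb (j + 1) $$ K = 0" if "j \<notin> B" for j
    using outside_B[OF that] by (auto simp: fdb_nth_below)
  have lax_inv_R: "lax_inv R $$ K' = (\<Sum>j\<in>B. R $$ (- j) * h_fdb j $$ K')" if "K' \<le> K + 1" for K'
    unfolding lax_inv_nth
    by (rule Sum_any_eq_sum_superset[OF \<open>finite B\<close>]) (simp add: lax_inv_term_outside_B that)
  have "nabla (h_fdb j) $$ K = D (h_fdb j $$ K) + h_fdb j $$ (K + 1) +
      (\<Sum>t\<in>{1..K-s}. h $$ t * h_fdb j $$ (K - t))" if "j \<in> B" for j
    using that by (intro nabla_nth vanishes_below_mono[OF conjunct1[OF fdb_leading_terms]])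
      (simp add: B_def)
  then have "(\<Sum>j\<in>B. D (R $$ (- j)) * h_fdb j $$ K + R $$ (- j) * nabla (h_fdb j) $$ K) =
      D (\<Sum>j\<in>B. R $$ (- j) * h_fdb j $$ K) + (\<Sum>j\<in>B. R $$ (- j) * h_fdb j $$ (K + 1)) +
      (\<Sum>t\<in>{1..K-s}. h $$ t * (\<Sum>j\<in>B. R $$ (- j) * h_fdb j $$ (K - t)))"
    by (simp add: D_sum D_mult sum.distrib sum_distrib_left distrib_left algebra_simps
        sum.swap[of _ "{1..K-s}"])
  also have "\<dots> = nabla (lax_inv R) $$ K"
    unfolding nabla_nth[OF lax_inv_vanishes_below, of R K, folded s_def]
    by (simp add: lax_inv_R)
  finally have nabla_eq: "nabla (lax_inv R) $$ K =
      (\<Sum>j\<in>B. D (R $$ (- j)) * h_fdb j $$ K + R $$ (- j) * nabla (h_fdb j) $$ K)" ..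
  have "lax_inv (dx D R) $$ K = (\<Sum>j\<in>B. D (R $$ (- j)) * h_fdb j $$ K)"
    unfolding lax_inv_nth dx_nth
    by (rule Sum_any_eq_sum_superset[OF \<open>finite B\<close>]) (simp add: term_outside_B)
  moreover have "lax_inv (zpow 1 * R) $$ K = (\<Sum>j\<in>B. R $$ (- j) * nabla (h_fdb j) $$ K)"
    unfolding lax_inv_zpow_one_times_nth fdb_succ
    by (rule Sum_any_eq_sum_superset[OF \<open>finite B\<close>])
      (simp add: term_outside_B(2)[simplified fdb_succ])
  ultimately show "nabla (lax_inv R) $$ K = lax_inv (dx D R + zpow 1 * R) $$ K"
    by (simp add: nabla_eq lax_inv_add sum.distrib)
qed

lemma lax_inv_pd_mult_zpow:
  assumes "lax_inv Q = zpow a"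
  shows "lax_inv (pd_mult D (zpow k) Q) = zpow a * h_fdb k"
proof (induction k rule: int_induct[where k = 0])
  case base
  then show ?case using assms by simp
next
  case (step1 k)
  then show ?case
    by (simp add: pd_mult_zpow_succ nabla_lax_inv[symmetric] nabla_zpow_times fdb_succ)
next
  case (step2 k)
  have "nabla (lax_inv (pd_mult D (zpow (k - 1)) Q)) = nabla (zpow a * h_fdb (k - 1))"
    using pd_mult_zpow_succ[of "k - 1" Q] step2(2)
    by (simp add: nabla_lax_inv nabla_zpow_times fdb_succ[of "k - 1", simplified])
  then show ?case by (rule nabla_inj)
qed

definition lax_comp_term :: "'a fls \<Rightarrow> int \<Rightarrow> int \<Rightarrow> int \<Rightarrow> nat \<Rightarrow> 'a" where
  "lax_comp_term Q K k j i = of_int (ibinom k i) * (D ^^ i) (Q $$ (- j + k - int i)) * h_fdb j $$ K"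

lemma lax_comp_term_nonzero_imp:
  assumes "lax_comp_term Q K k j i \<noteq> 0"
  shows "- K \<le> j \<and> fls_subdegree Q \<le> - j + k - int i"
proof -
  from assms have "Q $$ (- j + k - int i) \<noteq> 0" "h_fdb j $$ K \<noteq> 0"
    by (auto simp: lax_comp_term_def)
  then show ?thesis
    using fdb_nth_below[of K j] fls_subdegree_leI by force
qed

lemma finite_lax_comp_term_support: "finite {x. case_prod (lax_comp_term Q K k) x \<noteq> 0}"
  by (rule finite_subset[of _ "{-K..k - fls_subdegree Q} \<times> {0..nat (k + K - fls_subdegree Q)}"])
    (auto dest!: lax_comp_term_nonzero_imp)

lemma lax_inv_pd_mult_zpow_nth:
  "lax_inv (pd_mult D (zpow k) Q) $$ K = Sum_any (case_prod (lax_comp_term Q K k))"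
proof -
  have "lax_inv (pd_mult D (zpow k) Q) $$ K = Sum_any (\<lambda>j. Sum_any (\<lambda>i. lax_comp_term Q K k j i))"
    unfolding lax_inv_nth pd_mult_zpow_nth lax_comp_term_def
    by (intro arg_cong[where f = Sum_any] ext Sum_any_left_distrib finite_pd_mult_zpow_support)
  then show ?thesis
    using Sum_any_curry[OF finite_lax_comp_term_support] by simp
qed

lemma finite_lax_pd_mult_support:
  "finite {x. (\<lambda>(j, k, i). P $$ (- k) * lax_comp_term Q K k j i) x \<noteq> 0}"
proof (rule finite_subset)
  show "{x. (\<lambda>(j, k, i). P $$ (- k) * lax_comp_term Q K k j i) x \<noteq> 0} \<subseteq>
      {-K..- fls_subdegree P - fls_subdegree Q} \<times> {fls_subdegree Q - K..- fls_subdegree P} \<times>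
      {0..nat (K - fls_subdegree P - fls_subdegree Q)}"
  proof
    fix x
    assume "x \<in> {x. (\<lambda>(j, k, i). P $$ (- k) * lax_comp_term Q K k j i) x \<noteq> 0}"
    moreover obtain j k i where x: "x = (j, k, i)" by (cases x) auto
    ultimately have "P $$ (- k) \<noteq> 0" "lax_comp_term Q K k j i \<noteq> 0"
      by auto
    then have "fls_subdegree P \<le> - k" "- K \<le> j" "fls_subdegree Q \<le> - j + k - int i"
      using fls_subdegree_leI[of P "- k"] lax_comp_term_nonzero_imp[of Q K k j i] by auto
    then show "x \<in> {-K..- fls_subdegree P - fls_subdegree Q} \<times> {fls_subdegree Q - K..- fls_subdegree P} \<times>
        {0..nat (K - fls_subdegree P - fls_subdegree Q)}"
      unfolding x by auto
  qed
qed simp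

(* Both sides are sums of the same terms indexed by (j, k, i), taken in different orders. *)
lemma lax_inv_pd_mult_nth:
  "lax_inv (pd_mult D P Q) $$ K = Sum_any (\<lambda>k. P $$ (- k) * lax_inv (pd_mult D (zpow k) Q) $$ K)"
proof -
  define g where "g = (\<lambda>(j, k, i). P $$ (- k) * lax_comp_term Q K k j i)"
  have "lax_inv (pd_mult D P Q) $$ K =
      Sum_any (\<lambda>j. Sum_any (\<lambda>b. pd_mult_term P Q (- j) b * h_fdb j $$ K))"
    unfolding lax_inv_nth pd_mult_nth by (simp add: Sum_any_left_distrib finite_pd_mult_term_support)
  also have "\<dots> = Sum_any (\<lambda>j. Sum_any (\<lambda>b. g (j, b)))"
    by (simp add: g_def lax_comp_term_def pd_mult_term_def split_def algebra_simps)
  also have "\<dots> = Sum_any g"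
    unfolding g_def by (rule Sum_any_curry[OF finite_lax_pd_mult_support])
  also have "\<dots> = Sum_any (\<lambda>(k, j, i). g (j, k, i))"
  proof (rule Sum_any.reindex_cong[of "\<lambda>(k, j, i). (j, k, i)"])
    show "bij (\<lambda>(k, j, i). (j, k, i))"
      by (rule o_bij[of "\<lambda>(k, j, i). (j, k, i)"]) (auto simp: fun_eq_iff)
  qed (auto simp: fun_eq_iff)
  also have "\<dots> = Sum_any (\<lambda>k. Sum_any (\<lambda>(j, i). g (j, k, i)))"
  proof (rule Sum_any_curry[of "\<lambda>(k, j, i). g (j, k, i)", simplified, symmetric])
    show "finite {x. (case x of (k, j, i) \<Rightarrow> g (j, k, i)) \<noteq> 0}"
      unfolding g_def
      by (rule finite_subset[OF _ finite_imageI[OF finite_lax_pd_mult_support, of "\<lambda>(j, k, i). (k, j, i)"]])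
        (force simp: image_iff)
  qed
  also have "\<dots> = Sum_any (\<lambda>k. P $$ (- k) * lax_inv (pd_mult D (zpow k) Q) $$ K)"
    unfolding lax_inv_pd_mult_zpow_nth Sum_any_right_distrib[OF finite_lax_comp_term_support] g_def
    by (simp add: split_def)
  finally show ?thesis .
qed

lemma lax_inv_pd_mult_eq_zpow_times:
  assumes "lax_inv Q = zpow a"
  shows "lax_inv (pd_mult D P Q) = zpow a * lax_inv P"
proof (rule fls_eqI)
  fix K
  show "lax_inv (pd_mult D P Q) $$ K = (zpow a * lax_inv P) $$ K"
    unfolding lax_inv_pd_mult_nth lax_inv_pd_mult_zpow[OF assms] by (simp add: zpow_times lax_inv_nth)
qed

lemma lax_inv_pd_pow_LaxOp: "lax_inv (pd_pow D (LaxOp D h) n) = zpow (int n)"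
proof (induction n)
  case (Suc n)
  have "lax_inv (pd_pow D (LaxOp D h) (Suc n)) = zpow (int n) * zpow 1"
    using lax_inv_pd_mult_eq_zpow_times[OF Suc] by (simp add: pd_pow_def lax_inv_LaxOp)
  then show ?case
    by (simp add: add.commute flip: zpow_add)
qed (simp add: pd_pow_def)

section \<open>KP currents and the Gelfand-Dickey reduction\<close>

lemma fdb_combination_coeffs_eq_0:
  assumes "\<And>K. K \<le> 0 \<Longrightarrow> (\<Sum>l<m. fls_const (d l) * h_fdb (int l)) $$ K = 0"
  shows "\<forall>l<m. d l = 0"
  using assms
proof (induction m)
  case (Suc m)
  have "h_fdb (int l) $$ (- int m) = 0" if "l < m" for l
    using that by (simp add: fdb_nth_below)
  then have "(\<Sum>l<m. fls_const (d l) * h_fdb (int l)) $$ (- int m) = 0"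
    by (simp add: fls_nth_sum)
  moreover have "(\<Sum>l<Suc m. fls_const (d l) * h_fdb (int l)) $$ (- int m) = 0"
    using Suc.prems[of "- int m"] by simp
  ultimately have "d m = 0"
    by (simp add: fls_nth_sum)
  then have "(\<Sum>l<m. fls_const (d l) * h_fdb (int l)) $$ K = 0" if "K \<le> 0" for K
    using Suc.prems[OF that] by simp
  then have "\<forall>l<m. d l = 0"
    by (rule Suc.IH)
  with \<open>d m = 0\<close> show ?case
    by (simp add: less_Suc_eq)
qed simp

lemma Hcur_eqI:
  assumes G: "G = h_fdb (int n) + (\<Sum>l<n - 1. fls_const (c l) * h_fdb (int l))"
    and G_coeffs: "\<And>m. m \<ge> 0 \<Longrightarrow> zcoeff G m = (if m = int n then 1 else 0)"
  shows "Hcur D h n = G"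
  unfolding Hcur_def
proof (rule the_equality)
  fix G'
  assume "(\<exists>c'. G' = h_fdb (int n) + (\<Sum>l<n - 1. fls_const (c' l) * h_fdb (int l))) \<and>
    (\<forall>m\<ge>0. zcoeff G' m = (if m = int n then 1 else 0))"
  then obtain c' where G': "G' = h_fdb (int n) + (\<Sum>l<n - 1. fls_const (c' l) * h_fdb (int l))"
    and G'_coeffs: "\<forall>m\<ge>0. zcoeff G' m = (if m = int n then 1 else 0)"
    by blast
  have diff: "G' - G = (\<Sum>l<n - 1. fls_const (c' l - c l) * h_fdb (int l))"
    unfolding G G' by (rule fls_eqI) (simp add: fls_nth_sum sum_subtractf algebra_simps)
  have "(G' - G) $$ K = 0" if "K \<le> 0" for K
    using G'_coeffs[rule_format, of "- K"] G_coeffs[of "- K"] that by (simp add: zcoeff_def)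
  then have "\<forall>l<n - 1. c' l - c l = 0"
    unfolding diff by (rule fdb_combination_coeffs_eq_0)
  then show "G' = G"
    using diff by simp
qed (use assms in blast)

lemma Hcur_0: "Hcur D h 0 = 1"
  by (rule Hcur_eqI) (auto simp: zcoeff_def)

lemma lax_inv_pd_plus_eq_Hcur:
  assumes "n \<ge> 1" and M: "lax_inv M = zpow (int n)"
  shows "Hcur D h n = lax_inv (pd_plus M)"
proof (rule Hcur_eqI)
  note leading = lax_inv_eq_zpowD[OF M]
  show "lax_inv (pd_plus M) = h_fdb (int n) + (\<Sum>l<n - 1. fls_const (M $$ (- int l)) * h_fdb (int l))"
    using lax_inv_const_zpow[of 1]
    by (simp add: pd_plus_eq_sum_zpow[OF assms(1) leading] lax_inv_add lax_inv_sum lax_inv_const_zpow)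
  have tail: "lax_inv (M - pd_plus M) $$ K = 0" if "K \<le> 0" for K
  proof -
    have "(M - pd_plus M) $$ (- j) * h_fdb j $$ K = 0" for j
      using that by (cases "j < 0") (simp_all add: pd_plus_def fdb_nth_below)
    then show ?thesis by (simp add: lax_inv_nth)
  qed
  show "zcoeff (lax_inv (pd_plus M)) m = (if m = int n then 1 else 0)" if "m \<ge> 0" for m
  proof -
    have "lax_inv (pd_plus M) $$ (- m) = zpow (int n) $$ (- m)"
      using tail[of "- m"] that M by (simp add: lax_inv_diff)
    then show ?thesis
      by (simp add: zcoeff_def zpow_nth)
  qed
qed

lemma zpow_eq_Hcur_iff:
  assumes "n \<ge> 1" and "lax_inv M = zpow (int n)"
  shows "zpow (int n) = Hcur D h n \<longleftrightarrow> M = pd_plus M"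
  using lax_inv_pd_plus_eq_Hcur[OF assms] assms(2) lax_inv_inj by metis

lemma Sset_minus_one_iff: "(h, a) \<in> Sset D (-1) \<longleftrightarrow> a = zpow 1"
proof -
  have z: "inA (zpow 1 :: 'a fls)"
    unfolding inA_def zcoeff_def zpow_nth by auto
  have "(h, a) \<in> Sset D (-1) \<longleftrightarrow> inA a \<and> zpow (-1) * a = 1"
    unfolding Sset_def using inM Hcur_0 by simp
  also have "\<dots> \<longleftrightarrow> a = zpow 1"
  proof
    assume "inA a \<and> zpow (-1) * a = 1"
    then have "zpow 1 * (zpow (-1) * a) = zpow 1" by simp
    then show "a = zpow 1" by (simp add: mult.assoc[symmetric] zpow_add[symmetric])
  qed (use z in \<open>simp flip: zpow_add\<close>)
  finally show ?thesis .
qed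

lemma Sset_zpow_one_iff: "(h, zpow 1) \<in> Sset D (int n - 1) \<longleftrightarrow> zpow (int n) = Hcur D h n"
proof -
  have "inA (zpow 1 :: 'a fls)"
    unfolding inA_def zcoeff_def zpow_nth by auto
  moreover have "acoef (zpow 1 :: 'a fls) m = 0" if "m \<in> {0..int n - 1}" for m
    using that unfolding acoef_def zcoeff_def zpow_nth by auto
  moreover have "zpow (int n - 1) * zpow 1 = (zpow (int n) :: 'a fls)"
    by (simp flip: zpow_add)
  ultimately show ?thesis
    unfolding Sset_def using inM by simp
qed

lemma Sprime_minus_one_iff: "h \<in> Sprime D (-1) (int n - 1) \<longleftrightarrow> zpow (int n) = Hcur D h n"
proof
  assume "h \<in> Sprime D (-1) (int n - 1)"
  then obtain a where "(h, a) \<in> Sset D (-1)" "(h, a) \<in> Sset D (int n - 1)"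
    unfolding Sprime_def by auto
  then show "zpow (int n) = Hcur D h n"
    using Sset_minus_one_iff Sset_zpow_one_iff by simp
next
  assume "zpow (int n) = Hcur D h n"
  then have "(h, zpow 1) \<in> Sset D (-1) \<inter> Sset D (int n - 1)"
    using Sset_minus_one_iff Sset_zpow_one_iff by simp
  then show "h \<in> Sprime D (-1) (int n - 1)"
    unfolding Sprime_def by (metis fst_conv image_eqI)
qed

end

theorem mainTheorem4:
  fixes D :: "'a::{comm_ring_1, ring_char_0} \<Rightarrow> 'a" and h :: "'a fls" and n :: nat
  assumes "is_derivation D" and "n \<ge> 1" and "inM h"
  shows "(h \<in> Sprime D (-1) (int n - 1) \<longleftrightarrow> zpow (int n) = Hcur D h n) \<and>
         (zpow (int n) = Hcur D h n \<longleftrightarrow>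
            pd_pow D (LaxOp D h) n = pd_plus (pd_pow D (LaxOp D h) n))"
proof -
  interpret kp_point D h
    using assms(1,3) by unfold_locales
  show ?thesis
    using Sprime_minus_one_iff zpow_eq_Hcur_iff[OF assms(2) lax_inv_pd_pow_LaxOp] by blast
qed

end
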